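(* Let $X\in\{\mathsf{T}\mathsf{S},\ \mathsf{T}\mathsf{S}\mathsf{T}\}$ and $Y\in\{\mathsf{S}\mathsf{T},\ \mathsf{S}\mathsf{T}\mathsf{S},\ \mathsf{S}\mathsf{T}\mathsf{S}\mathsf{T}\}$. Then $X\not\sqsubseteq Y$ and $Y\not\sqsubseteq X$.
   Context: Fix attribute–taxonomy pairs $A_1{:}T_1,\dots,A_d{:}T_d$ with distinct attribute names, where each taxonomy $T_i=(V_i,\le_{V_i})$ is a poset. A t-tuple over a t-schema $S\subseteq\{A_1{:}T_1,\dots,A_d{:}T_d\}$ maps each $A_i$ in $S$ to a value of $V_i$; $\mathcal{D}$ is the set of all t-tuples over all such t-schemas. A preference relation is a binary relation $\succeq$ on $\mathcal{D}$. Preferences are given by a formula $F(x,y)=\bigvee_i P_i(x,y)$, a disjunction of statements; each statement $P_i$ is a disjunction of clauses, each clause a satisfiable conjunction of atoms of the forms $x[A_i]\le_{V_i} v$, $x[A_i]\not\le_{V_i} v$, $y[A_i]\le_{V_i} v$, $y[A_i]\not\le_{V_i} v$; the formula induces $t_1\succeq t_2\iff F(t_1,t_2)$. Operator $\mathsf{T}$ maps a formula to one inducing the transitive closure over $\mathcal{D}$ of the induced relation. Operator $\mathsf{S}$ (specificity-based refinement): repeat rounds; in a round, for each statement $P_i$ let $\mathrm{Impl}(P_i)$ be the set of statements $P_j$ such that $P_j(t_2,t_1)\Rightarrow P_i(t_1,t_2)$ for all $t_1,t_2\in\mathcal{D}$ but not conversely; simultaneously replace every $P_i$ with nonempty $\mathrm{Impl}(P_i)$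 by $P_i(x,y)\wedge\bigwedge_{P_j\in \mathrm{Impl}(P_i)}\neg P_j(y,x)$; stop when no $\mathrm{Impl}$ set is nonempty. After each operator, contradictory clauses and subsumed statements are removed. For $X\in\{\mathsf{T},\mathsf{S}\}^*$, $\succeq_X$ is the relation induced by applying the operators of $X$ in order to the initial formula. Containment $X\sqsubseteq Y$ means $\succeq_X\subseteq\succeq_Y$ for every initial preference formula (over any taxonomies). *)

theory Defs
  imports Main
begin

text \<open>Attributes are A_0,...,A_(d-1), identified with their indices.  Each taxonomy
  T_i = (V i, le i) is a poset whose values are encoded as natural numbers.
  A t-tuple is a partial map from attribute indices to values; its schema is its domain.\<close>

type_synonym ttuple = "nat \<Rightarrow> nat option"

definition wf_taxonomies :: "nat \<Rightarrow> (nat \<Rightarrow> nat set) \<Rightarrow> (nat \<Rightarrow> nat rel) \<Rightarrow> bool" where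
  "wf_taxonomies d V le \<longleftrightarrow> (\<forall>i<d. partial_order_on (V i) (le i))"

definition tdom :: "nat \<Rightarrow> (nat \<Rightarrow> nat set) \<Rightarrow> ttuple set" where
  "tdom d V = {t. dom t \<subseteq> {..<d} \<and> (\<forall>i a. t i = Some a \<longrightarrow> a \<in> V i)}"

datatype var = VX | VY

text \<open>Le v i a : v[A_i] <= a ;  NLe v i a : v[A_i] not<= a\<close>
datatype atom = Le var nat nat | NLe var nat nat

type_synonym clause = "atom list"
type_synonym statement = "clause list"
type_synonym formula = "statement list"

definition val_le :: "(nat \<Rightarrow> nat rel) \<Rightarrow> ttuple \<Rightarrow> nat \<Rightarrow> nat \<Rightarrow> bool" where
  "val_le le t i a \<longleftrightarrow> (\<exists>b. t i = Some b \<and> (b, a) \<in> le i)"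

fun pick :: "var \<Rightarrow> ttuple \<Rightarrow> ttuple \<Rightarrow> ttuple" where
  "pick VX t1 t2 = t1"
| "pick VY t1 t2 = t2"

fun atom_holds :: "(nat \<Rightarrow> nat rel) \<Rightarrow> atom \<Rightarrow> ttuple \<Rightarrow> ttuple \<Rightarrow> bool" where
  "atom_holds le (Le v i a) t1 t2 = val_le le (pick v t1 t2) i a"
| "atom_holds le (NLe v i a) t1 t2 = (\<not> val_le le (pick v t1 t2) i a)"

fun atom_wf :: "nat \<Rightarrow> (nat \<Rightarrow> nat set) \<Rightarrow> atom \<Rightarrow> bool" where
  "atom_wf d V (Le v i a) = (i < d \<and> a \<in> V i)"
| "atom_wf d V (NLe v i a) = (i < d \<and> a \<in> V i)"

definition clause_holds :: "(nat \<Rightarrow> nat rel) \<Rightarrow> clause \<Rightarrow> ttuple \<Rightarrow> ttuple \<Rightarrow> bool" where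
  "clause_holds le c t1 t2 \<longleftrightarrow> (\<forall>at\<in>set c. atom_holds le at t1 t2)"

definition clause_wf :: "nat \<Rightarrow> (nat \<Rightarrow> nat set) \<Rightarrow> (nat \<Rightarrow> nat rel) \<Rightarrow> clause \<Rightarrow> bool" where
  "clause_wf d V le c \<longleftrightarrow> (\<forall>at\<in>set c. atom_wf d V at)
     \<and> (\<exists>t1\<in>tdom d V. \<exists>t2\<in>tdom d V. clause_holds le c t1 t2)"

definition formula_wf :: "nat \<Rightarrow> (nat \<Rightarrow> nat set) \<Rightarrow> (nat \<Rightarrow> nat rel) \<Rightarrow> formula \<Rightarrow> bool" where
  "formula_wf d V le F \<longleftrightarrow> (\<forall>P\<in>set F. \<forall>c\<in>set P. clause_wf d V le c)"

definition stmt_rel :: "nat \<Rightarrow> (nat \<Rightarrow> nat set) \<Rightarrow> (nat \<Rightarrow> nat rel) \<Rightarrow> statement \<Rightarrow> ttuple rel" where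
  "stmt_rel d V le P = {(t1, t2). t1 \<in> tdom d V \<and> t2 \<in> tdom d V \<and> (\<exists>c\<in>set P. clause_holds le c t1 t2)}"

text \<open>All operators (Impl, subsumption) are defined semantically over D, so a statement
  is represented by the relation on D it induces and a formula by the set of its statements.\<close>

definition sem :: "nat \<Rightarrow> (nat \<Rightarrow> nat set) \<Rightarrow> (nat \<Rightarrow> nat rel) \<Rightarrow> formula \<Rightarrow> ttuple rel set" where
  "sem d V le F = stmt_rel d V le ` set F"

definition induced :: "'a rel set \<Rightarrow> 'a rel" where
  "induced G = \<Union> G"

text \<open>Removal of subsumed statements (contradictory clauses do not affect the semantics).\<close>
definition cleanup :: "'a rel set \<Rightarrow> 'a rel set" where
  "cleanup G = {P \<in> G. \<not> (\<exists>Q\<in>G. P \<subset> Q)}"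

text \<open>Operator T: its statements are the compositions of chains of statements
  P_i1(x,z1) /\ P_i2(z1,z2) /\ ... /\ P_ik(z_(k-1),y) (intermediate tuples in D);
  their disjunction induces the transitive closure.\<close>
inductive_set chains :: "'a rel set \<Rightarrow> 'a rel set" for G where
  base: "P \<in> G \<Longrightarrow> P \<in> chains G"
| step: "P \<in> G \<Longrightarrow> Q \<in> chains G \<Longrightarrow> P O Q \<in> chains G"

definition opT :: "'a rel set \<Rightarrow> 'a rel set" where
  "opT G = cleanup (chains G)"

definition Impl :: "'a rel set \<Rightarrow> 'a rel \<Rightarrow> 'a rel set" where
  "Impl G P = {Q \<in> G. converse Q \<subseteq> P \<and> \<not> P \<subseteq> converse Q}"

definition sround :: "'a rel set \<Rightarrow> 'a rel set" where
  "sround G = (\<lambda>P. if Impl G P = {} then P else P - \<Union> (converse ` Impl G P)) ` G"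

definition sstable :: "'a rel set \<Rightarrow> bool" where
  "sstable G \<longleftrightarrow> (\<forall>P\<in>G. Impl G P = {})"

definition opS :: "'a rel set \<Rightarrow> 'a rel set" where
  "opS G = cleanup ((sround ^^ (LEAST n. sstable ((sround ^^ n) G))) G)"

datatype oper = T | S

fun apply_op :: "oper \<Rightarrow> 'a rel set \<Rightarrow> 'a rel set" where
  "apply_op T G = opT G"
| "apply_op S G = opS G"

text \<open>Apply the operators of the word X in order (leftmost first).\<close>
definition apply_word :: "oper list \<Rightarrow> 'a rel set \<Rightarrow> 'a rel set" where
  "apply_word X G = fold apply_op X G"

definition pref_rel :: "oper list \<Rightarrow> nat \<Rightarrow> (nat \<Rightarrow> nat set) \<Rightarrow> (nat \<Rightarrow> nat rel) \<Rightarrow> formula \<Rightarrow> ttuple rel" where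
  "pref_rel X d V le F = induced (apply_word X (sem d V le F))"

definition contained :: "oper list \<Rightarrow> oper list \<Rightarrow> bool" where
  "contained X Y \<longleftrightarrow> (\<forall>d V le F. wf_taxonomies d V le \<longrightarrow> formula_wf d V le F \<longrightarrow>
      pref_rel X d V le F \<subseteq> pref_rel Y d V le F)"

end

theory Submission
  imports Defs
begin

text \<open>One attribute with the discrete order on five values suffices: every statement is then
  a fan relating one tuple to a set of tuples, and each operator acts on a finite set of edges of
  a directed graph.  In the first formula, S deletes the edge 0 \<rightarrow> 1 of the fan 0 \<rightarrow> {1,2}
  because the more specific statement 1 \<rightarrow> 0 reverses it; T first absorbs 1 \<rightarrow> 0 into the
  larger fan 1 \<rightarrow> {0,4}, which is no longer more specific, so 0 \<rightarrow> 1 survives T S.  In the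
  second formula it is T that creates the reversing statement 1 \<rightarrow> 0, as the composite of
  1 \<rightarrow> {3,4} and 3 \<rightarrow> 0, while an S applied first cuts 1 \<rightarrow> {3,4} down to 1 \<rightarrow> {4}.
  Once 0 \<rightarrow> 1 is gone it never returns: every operator stays inside the transitive closure of
  the relation it is applied to, and there 1 is unreachable from 0.\<close>

lemma cleanup_subset: "cleanup G \<subseteq> G"
  unfolding cleanup_def by auto

lemma Union_cleanup:
  assumes "finite G"
  shows "\<Union>(cleanup G) = \<Union>G"
proof
  show "\<Union>G \<subseteq> \<Union>(cleanup G)"
  proof
    fix p assume "p \<in> \<Union>G"
    then obtain P where P: "P \<in> G" "p \<in> P" by auto
    from finite_has_maximal2[OF assms P(1)]
    obtain M where "M \<in> G" "P \<subseteq> M" "\<forall>Q\<in>G. M \<subseteq> Q \<longrightarrow> M = Q" by blast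
    then have "M \<in> cleanup G" unfolding cleanup_def by auto
    with P \<open>P \<subseteq> M\<close> show "p \<in> \<Union>(cleanup G)" by auto
  qed
qed (use cleanup_subset in blast)

lemma empty_notin_cleanup: "Q \<in> G \<Longrightarrow> Q \<noteq> {} \<Longrightarrow> {} \<notin> cleanup G"
  unfolding cleanup_def by auto

lemma cleanup_eqI:
  assumes "K \<subseteq> G" "G \<subseteq> C" and K_maximal: "\<forall>P\<in>K. \<forall>Q\<in>C. \<not> P \<subset> Q"
    and "C \<subseteq> K \<union> E" and E_dominated: "\<forall>P\<in>E. \<exists>Q\<in>K. P \<subset> Q"
  shows "cleanup G = K"
proof (intro set_eqI iffI)
  fix P assume "P \<in> cleanup G"
  then have "P \<in> G" and P_maximal: "\<forall>Q\<in>G. \<not> P \<subset> Q" unfolding cleanup_def by auto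
  show "P \<in> K"
  proof (rule ccontr)
    assume "P \<notin> K"
    with \<open>P \<in> G\<close> assms(2,4) have "P \<in> E" by auto
    with E_dominated obtain Q where "Q \<in> K" "P \<subset> Q" by auto
    with assms(1) P_maximal show False by auto
  qed
next
  fix P assume "P \<in> K"
  with assms(1) have "P \<in> G" by auto
  moreover have "\<forall>Q\<in>G. \<not> P \<subset> Q" using \<open>P \<in> K\<close> assms(2) K_maximal by auto
  ultimately show "P \<in> cleanup G" unfolding cleanup_def by auto
qed

lemma chains_subset_closed:
  assumes "G \<subseteq> C" and "\<And>P Q. P \<in> G \<Longrightarrow> Q \<in> C \<Longrightarrow> P O Q \<in> C"
  shows "chains G \<subseteq> C"
proof
  fix P assume "P \<in> chains G"
  then show "P \<in> C" by induction (use assms in auto)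
qed

lemma Union_chains_subset: "\<Union>(chains G) \<subseteq> (\<Union>G)\<^sup>+"
proof
  fix p assume "p \<in> \<Union>(chains G)"
  then obtain P where "P \<in> chains G" "p \<in> P" by auto
  then show "p \<in> (\<Union>G)\<^sup>+"
  proof (induction P arbitrary: p)
    case (base P)
    then show ?case by (meson UnionI r_into_trancl')
  next
    case (step P Q)
    then obtain x y z where "p = (x, z)" "(x, y) \<in> P" "(y, z) \<in> Q" by auto
    with step show ?case by (meson UnionI r_into_trancl' trancl_trans)
  qed
qed

lemma Union_opT_subset: "\<Union>(opT G) \<subseteq> (\<Union>G)\<^sup>+"
  unfolding opT_def using cleanup_subset Union_chains_subset by blast

lemma Union_subset_Union_opT: "finite (chains G) \<Longrightarrow> \<Union>G \<subseteq> \<Union>(opT G)"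
  unfolding opT_def by (simp add: Union_cleanup) (use chains.base in blast)

lemma Union_sround_subset: "\<Union>(sround G) \<subseteq> \<Union>G"
  unfolding sround_def by auto

lemma Union_funpow_sround_subset: "\<Union>((sround ^^ n) G) \<subseteq> \<Union>G"
proof (induction n)
  case (Suc n)
  then show ?case using Union_sround_subset[of "(sround ^^ n) G"] by simp
qed simp

lemma Union_opS_subset: "\<Union>(opS G) \<subseteq> \<Union>G"
  unfolding opS_def using cleanup_subset Union_funpow_sround_subset by blast

lemma apply_word_simps:
  "apply_word [] G = G"
  "apply_word (a # w) G = apply_word w (apply_op a G)"
  unfolding apply_word_def by simp_all

lemma trancl_subset_trancl: "r \<subseteq> s\<^sup>+ \<Longrightarrow> r\<^sup>+ \<subseteq> s\<^sup>+"
  by (drule trancl_mono_subset) (simp add: trans_trancl)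

lemma Union_apply_word_subset: "\<Union>(apply_word w G) \<subseteq> (\<Union>G)\<^sup>+"
proof (induction w arbitrary: G)
  case Nil
  show ?case by (simp add: apply_word_simps trancl_incr)
next
  case (Cons a w)
  have "\<Union>(opS G) \<subseteq> (\<Union>G)\<^sup>+"
    using Union_opS_subset by (blast intro: r_into_trancl')
  then have "\<Union>(apply_op a G) \<subseteq> (\<Union>G)\<^sup>+"
    by (cases a) (simp_all add: Union_opT_subset)
  then have "(\<Union>(apply_op a G))\<^sup>+ \<subseteq> (\<Union>G)\<^sup>+"
    by (rule trancl_subset_trancl)
  with Cons.IH[of "apply_op a G"] show ?case by (simp add: apply_word_simps)
qed

lemma notin_Union_apply_word:
  assumes "\<Union>G \<subseteq> U" "p \<notin> U\<^sup>+"
  shows "p \<notin> \<Union>(apply_word w G)"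
  using Union_apply_word_subset[of w G] trancl_mono_subset[OF assms(1)] assms(2) by blast

lemma Impl_insert [simp]:
  "Impl {} P = {}"
  "Impl (insert Q G) P = (if Q\<inverse> \<subseteq> P \<and> \<not> P \<subseteq> Q\<inverse> then insert Q (Impl G P) else Impl G P)"
  unfolding Impl_def by auto

lemma sstable_iff: "sstable G \<longleftrightarrow> (\<forall>P\<in>G. \<forall>Q\<in>G. \<not> (Q\<inverse> \<subseteq> P \<and> \<not> P \<subseteq> Q\<inverse>))"
  unfolding sstable_def Impl_def by auto

lemma sstable_subset: "sstable C \<Longrightarrow> G \<subseteq> C \<Longrightarrow> sstable G"
  unfolding sstable_iff by blast

lemma opS_sstable: "sstable G \<Longrightarrow> opS G = cleanup G"
  unfolding opS_def by (subst Least_eq_0) auto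

lemma opS_one_round:
  assumes "\<not> sstable G" "sstable (sround G)"
  shows "opS G = cleanup (sround G)"
proof -
  have "(LEAST n. sstable ((sround ^^ n) G)) = 1"
  proof (rule Least_equality)
    fix n assume "sstable ((sround ^^ n) G)"
    with assms show "1 \<le> n" by (cases n) auto
  qed (use assms in simp)
  then show ?thesis unfolding opS_def by simp
qed

lemma pref_rel_Cons:
  "pref_rel (a # w) d V le F = \<Union>(apply_word w (apply_op a (sem d V le F)))"
  unfolding pref_rel_def induced_def apply_word_def by simp

lemma not_contained_if_separated:
  assumes "wf_taxonomies d V le" "formula_wf d V le F"
    and "p \<in> pref_rel X d V le F" "p \<notin> pref_rel Y d V le F"
  shows "\<not> contained X Y"
  using assms unfolding contained_def by blast

section \<open>Fans over a single attribute\<close>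

definition point :: "nat \<Rightarrow> ttuple" where
  "point k = [0 \<mapsto> k]"

definition fan :: "nat \<Rightarrow> nat set \<Rightarrow> ttuple rel" where
  "fan k A = (\<lambda>j. (point k, point j)) ` A"

lemma point_inject [simp]: "point a = point b \<longleftrightarrow> a = b"
  unfolding point_def by (metis fun_upd_same option.inject)

lemma mem_fan [simp]: "(point a, point b) \<in> fan k A \<longleftrightarrow> a = k \<and> b \<in> A"
  unfolding fan_def by auto

lemma fan_relcomp [simp]: "fan a A O fan b B = (if b \<in> A then fan a B else {})"
  unfolding fan_def by auto

lemma fan_empty_iff [simp]: "fan a A = {} \<longleftrightarrow> A = {}" "{} = fan a A \<longleftrightarrow> A = {}"
  unfolding fan_def by auto

lemma fan_subset_iff [simp]: "fan a A \<subseteq> fan b B \<longleftrightarrow> A = {} \<or> (a = b \<and> A \<subseteq> B)"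
  unfolding fan_def by auto

lemma fan_eq_iff [simp]: "fan a A = fan b B \<longleftrightarrow> (A = {} \<and> B = {}) \<or> (a = b \<and> A = B)"
  by (simp only: set_eq_subset fan_subset_iff) auto

lemma converse_fan_subset_iff [simp]:
  "(fan b B)\<inverse> \<subseteq> fan a A \<longleftrightarrow> B = {} \<or> (B \<subseteq> {a} \<and> b \<in> A)"
proof -
  have "(fan b B)\<inverse> \<subseteq> fan a A \<longleftrightarrow> (\<forall>j\<in>B. (point j, point b) \<in> fan a A)"
    unfolding fan_def by auto
  then show ?thesis by (simp only: mem_fan) blast
qed

lemma fan_subset_converse_iff [simp]:
  "fan a A \<subseteq> (fan b B)\<inverse> \<longleftrightarrow> A = {} \<or> (A \<subseteq> {b} \<and> a \<in> B)"
proof -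
  have "fan a A \<subseteq> (fan b B)\<inverse> \<longleftrightarrow> (\<forall>j\<in>A. (point j, point a) \<in> fan b B)"
    unfolding fan_def by auto
  then show ?thesis by (simp only: mem_fan) blast
qed

lemma fan_eq_converse_iff [simp]:
  "fan a A = (fan b B)\<inverse> \<longleftrightarrow> (A = {} \<and> B = {}) \<or> (A \<subseteq> {b} \<and> b \<in> A \<and> B \<subseteq> {a} \<and> a \<in> B)"
  "(fan b B)\<inverse> = fan a A \<longleftrightarrow> (A = {} \<and> B = {}) \<or> (A \<subseteq> {b} \<and> b \<in> A \<and> B \<subseteq> {a} \<and> a \<in> B)"
  by (simp_all only: eq_commute[of "(fan b B)\<inverse>"] set_eq_subset fan_subset_converse_iff
      converse_fan_subset_iff) blast+

lemma fan_diff_converse [simp]: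
  "fan a A - (fan b B)\<inverse> = (if a \<in> B then fan a (A - {b}) else fan a A)"
  unfolding fan_def by auto

definition fans :: "nat set \<Rightarrow> nat set set \<Rightarrow> ttuple rel set" where
  "fans Xs Ts = insert {} (\<Union>a\<in>Xs. fan a ` Ts)"

lemma fans_relcomp_closed:
  assumes "P \<in> fans Xs Ts" "Q \<in> fans Xs Ts"
  shows "P O Q \<in> fans Xs Ts"
proof -
  consider "P = {} \<or> Q = {}"
    | a A b B where "P = fan a A" "Q = fan b B" "a \<in> Xs" "B \<in> Ts"
    using assms unfolding fans_def by blast
  then show ?thesis by cases (auto simp: fans_def)
qed

lemma chains_fans:
  assumes "G \<subseteq> fans Xs Ts"
  shows "chains G \<subseteq> fans Xs Ts"
  by (rule chains_subset_closed[OF assms]) (use assms fans_relcomp_closed in blast)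

lemma finite_fans: "finite Xs \<Longrightarrow> finite Ts \<Longrightarrow> finite (fans Xs Ts)"
  unfolding fans_def by simp

lemma finite_chains_fans:
  assumes "G \<subseteq> fans Xs Ts" "finite Xs" "finite Ts"
  shows "finite (chains G)"
  using finite_subset[OF chains_fans[OF assms(1)] finite_fans[OF assms(2,3)]] .

lemma not_reachable_if_closed:
  assumes "r `` Z \<subseteq> Z" "a \<in> Z" "b \<notin> Z"
  shows "(a, b) \<notin> r\<^sup>+"
proof
  assume "(a, b) \<in> r\<^sup>+"
  with assms(2) have "b \<in> r\<^sup>* `` Z" by (auto dest: trancl_into_rtrancl)
  with Image_closed_trancl[OF assms(1)] assms(3) show False by simp
qed

definition five_values :: "nat \<Rightarrow> nat set" where
  "five_values = (\<lambda>_. {..<5})"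

definition discrete_order :: "nat \<Rightarrow> nat rel" where
  "discrete_order = (\<lambda>_. Id_on {..<5})"

definition fan_statement :: "nat \<Rightarrow> nat list \<Rightarrow> statement" where
  "fan_statement x ys = map (\<lambda>y. [Le VX 0 x, Le VY 0 y]) ys"

lemma wf_discrete_order: "wf_taxonomies 1 five_values discrete_order"
  unfolding wf_taxonomies_def five_values_def discrete_order_def partial_order_on_def preorder_on_def
  by (simp add: refl_on_Id_on Id_on_subset_Times)

lemma point_in_tdom: "x < 5 \<Longrightarrow> point x \<in> tdom 1 five_values"
  unfolding tdom_def point_def five_values_def by simp

lemma tdom_eq_point: "t \<in> tdom 1 five_values \<Longrightarrow> t 0 = Some x \<Longrightarrow> t = point x"
  unfolding tdom_def point_def by (auto simp: fun_eq_iff dom_def)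

lemma clause_holds_fan_statement:
  assumes "x < 5" "y < 5"
  shows "clause_holds discrete_order [Le VX 0 x, Le VY 0 y] t1 t2 \<longleftrightarrow> t1 0 = Some x \<and> t2 0 = Some y"
  using assms by (auto simp: clause_holds_def val_le_def discrete_order_def)

lemma stmt_rel_fan_statement:
  assumes "x < 5" "\<forall>y\<in>set ys. y < 5"
  shows "stmt_rel 1 five_values discrete_order (fan_statement x ys) = fan x (set ys)"
proof (intro set_eqI iffI)
  fix p assume "p \<in> stmt_rel 1 five_values discrete_order (fan_statement x ys)"
  then obtain t1 t2 y where "p = (t1, t2)" "t1 \<in> tdom 1 five_values" "t2 \<in> tdom 1 five_values"
    "y \<in> set ys" "clause_holds discrete_order [Le VX 0 x, Le VY 0 y] t1 t2"
    unfolding stmt_rel_def fan_statement_def by auto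
  with assms have "t1 = point x" "t2 = point y"
    by (auto simp: clause_holds_fan_statement intro: tdom_eq_point)
  with \<open>p = (t1, t2)\<close> \<open>y \<in> set ys\<close> show "p \<in> fan x (set ys)" by simp
next
  fix p assume "p \<in> fan x (set ys)"
  then obtain y where p: "p = (point x, point y)" "y \<in> set ys"
    unfolding fan_def by auto
  with assms have "clause_holds discrete_order [Le VX 0 x, Le VY 0 y] (point x) (point y)"
    by (simp add: clause_holds_fan_statement point_def)
  moreover have "point x \<in> tdom 1 five_values" "point y \<in> tdom 1 five_values"
    using assms p point_in_tdom by blast+
  ultimately show "p \<in> stmt_rel 1 five_values discrete_order (fan_statement x ys)"
    unfolding stmt_rel_def fan_statement_def using p by auto
qed

lemma fan_statement_wf:
  assumes "x < 5" "\<forall>y\<in>set ys. y < 5" "c \<in> set (fan_statement x ys)"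
  shows "clause_wf 1 five_values discrete_order c"
proof -
  from assms(3) obtain y where y: "y \<in> set ys" "c = [Le VX 0 x, Le VY 0 y]"
    unfolding fan_statement_def by auto
  with assms have "clause_holds discrete_order c (point x) (point y)"
    by (simp add: clause_holds_fan_statement point_def)
  moreover have "point x \<in> tdom 1 five_values" "point y \<in> tdom 1 five_values"
    using assms y point_in_tdom by blast+
  moreover have "\<forall>at\<in>set c. atom_wf 1 five_values at"
    using assms y by (simp add: five_values_def)
  ultimately show ?thesis
    unfolding clause_wf_def by blast
qed

section \<open>A formula separating \<open>T S\<close> and \<open>T S T\<close> from words starting with \<open>S\<close>\<close>

definition F1 :: formula where
  "F1 = [fan_statement 0 [1,2], fan_statement 1 [0], fan_statement 1 [3], fan_statement 3 [0,4]]"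

definition G1 :: "ttuple rel set" where
  "G1 = {fan 0 {1,2}, fan 1 {0}, fan 1 {3}, fan 3 {0,4}}"

lemma sem_F1: "sem 1 five_values discrete_order F1 = G1"
  unfolding sem_def F1_def G1_def by (simp add: stmt_rel_fan_statement[simplified])

lemma wf_F1: "formula_wf 1 five_values discrete_order F1"
  unfolding formula_wf_def F1_def by (auto intro!: fan_statement_wf[simplified])

lemma opS_G1: "opS G1 = cleanup {fan 0 {2}, fan 1 {0}, fan 1 {3}, fan 3 {0,4}}"
proof -
  have "sround G1 = {fan 0 {2}, fan 1 {0}, fan 1 {3}, fan 3 {0,4}}"
    unfolding sround_def G1_def by simp
  moreover have "\<not> sstable G1" unfolding G1_def sstable_iff by simp
  ultimately show ?thesis by (simp add: opS_one_round sstable_iff)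
qed

lemma no_01_after_S_F1: "(point 0, point 1) \<notin> pref_rel (S # w) 1 five_values discrete_order F1"
proof -
  let ?U = "\<Union>{fan 0 {2}, fan 1 {0}, fan 1 {3}, fan 3 {0,4}}"
  have "(point 0, point 1) \<notin> \<Union>(apply_word w (opS G1))"
  proof (rule notin_Union_apply_word)
    show "\<Union>(opS G1) \<subseteq> ?U"
      unfolding opS_G1 by (intro Union_mono cleanup_subset)
    show "(point 0, point 1) \<notin> ?U\<^sup>+"
      by (rule not_reachable_if_closed[of _ "{point 0, point 2}"]) (auto simp: fan_def)
  qed
  then show ?thesis unfolding pref_rel_Cons sem_F1 apply_op.simps .
qed

definition K1 :: "ttuple rel set" where
  "K1 = {fan 0 {1,2}, fan 0 {3}, fan 0 {0,4}, fan 1 {1,2}, fan 1 {3}, fan 1 {0,4},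
         fan 3 {1,2}, fan 3 {3}, fan 3 {0,4}}"

lemma opT_G1: "opT G1 = K1"
  unfolding opT_def
proof (rule cleanup_eqI)
  have c02: "fan 0 {1,2} \<in> chains G1" and c10: "fan 1 {0} \<in> chains G1"
    and c13: "fan 1 {3} \<in> chains G1" and c34: "fan 3 {0,4} \<in> chains G1"
    by (auto simp: G1_def intro: chains.base)
  have c03: "fan 0 {3} \<in> chains G1"
    using chains.step[OF _ c13, of "fan 0 {1,2}"] by (simp add: G1_def)
  have c14: "fan 1 {0,4} \<in> chains G1"
    using chains.step[OF _ c34, of "fan 1 {3}"] by (simp add: G1_def)
  have c04: "fan 0 {0,4} \<in> chains G1"
    using chains.step[OF _ c14, of "fan 0 {1,2}"] by (simp add: G1_def)
  have c12: "fan 1 {1,2} \<in> chains G1"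
    using chains.step[OF _ c02, of "fan 1 {0}"] by (simp add: G1_def)
  have c32: "fan 3 {1,2} \<in> chains G1"
    using chains.step[OF _ c02, of "fan 3 {0,4}"] by (simp add: G1_def)
  have c33: "fan 3 {3} \<in> chains G1"
    using chains.step[OF _ c03, of "fan 3 {0,4}"] by (simp add: G1_def)
  show "K1 \<subseteq> chains G1"
    unfolding K1_def using c02 c13 c34 c03 c14 c04 c12 c32 c33 by auto
  show "chains G1 \<subseteq> fans {0,1,3} {{1,2},{0},{3},{0,4}}"
    by (rule chains_fans) (auto simp: G1_def fans_def)
  show "\<forall>P\<in>K1. \<forall>Q\<in>fans {0,1,3} {{1,2},{0},{3},{0,4}}. \<not> P \<subset> Q"
    by (simp add: K1_def fans_def psubset_eq)
  show "fans {0,1,3} {{1,2},{0},{3},{0,4}} \<subseteq> K1 \<union> {{}, fan 0 {0}, fan 1 {0}, fan 3 {0}}"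
    by (auto simp: K1_def fans_def)
  show "\<forall>P\<in>{{}, fan 0 {0}, fan 1 {0}, fan 3 {0}}. \<exists>Q\<in>K1. P \<subset> Q"
    by (simp add: K1_def psubset_eq)
qed

lemma has_01_after_TS_F1:
  "(point 0, point 1) \<in> pref_rel [T, S] 1 five_values discrete_order F1"
  "(point 0, point 1) \<in> pref_rel [T, S, T] 1 five_values discrete_order F1"
proof -
  let ?K = "{fan 3 {2}, fan 3 {4}, fan 0 {1,2}, fan 0 {3}, fan 0 {0,4}, fan 1 {1,2}, fan 1 {3},
             fan 1 {0,4}, fan 3 {3}}"
  have "sround K1 = ?K"
    unfolding sround_def K1_def by simp
  moreover have "\<not> sstable K1" unfolding K1_def sstable_iff by simp
  moreover have "sstable ?K" unfolding sstable_iff by simp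
  ultimately have opS_K1: "opS K1 = cleanup ?K" by (simp add: opS_one_round)
  have in_S: "(point 0, point 1) \<in> \<Union>(opS K1)"
    unfolding opS_K1 by (simp add: Union_cleanup)
  have "?K \<subseteq> fans {0,1,3} {{1,2},{2},{3},{4},{0,4}}"
    by (simp add: fans_def)
  then have "opS K1 \<subseteq> fans {0,1,3} {{1,2},{2},{3},{4},{0,4}}"
    unfolding opS_K1 by (rule order_trans[OF cleanup_subset])
  then have "finite (chains (opS K1))" by (rule finite_chains_fans) simp_all
  then have in_ST: "(point 0, point 1) \<in> \<Union>(opT (opS K1))"
    using in_S by (rule subsetD[OF Union_subset_Union_opT])
  from in_S in_ST
  show "(point 0, point 1) \<in> pref_rel [T, S] 1 five_values discrete_order F1"
    "(point 0, point 1) \<in> pref_rel [T, S, T] 1 five_values discrete_order F1"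
    by (simp_all only: pref_rel_def induced_def apply_word_simps apply_op.simps sem_F1 opT_G1)
qed

section \<open>A formula separating \<open>S T\<close>, \<open>S T S\<close>, \<open>S T S T\<close> from words starting with \<open>T S\<close>\<close>

definition F2 :: formula where
  "F2 = [fan_statement 0 [1,2], fan_statement 1 [3,4], fan_statement 3 [0], fan_statement 3 [1]]"

definition G2 :: "ttuple rel set" where
  "G2 = {fan 0 {1,2}, fan 1 {3,4}, fan 3 {0}, fan 3 {1}}"

lemma sem_F2: "sem 1 five_values discrete_order F2 = G2"
  unfolding sem_def F2_def G2_def by (simp add: stmt_rel_fan_statement[simplified])

lemma wf_F2: "formula_wf 1 five_values discrete_order F2"
  unfolding formula_wf_def F2_def by (auto intro!: fan_statement_wf[simplified])

definition K2 :: "ttuple rel set" where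
  "K2 = {fan 0 {1,2}, fan 0 {3,4}, fan 0 {0}, fan 1 {1,2}, fan 1 {3,4}, fan 1 {0},
         fan 3 {1,2}, fan 3 {3,4}, fan 3 {0}}"

lemma opT_G2: "opT G2 = K2"
  unfolding opT_def
proof (rule cleanup_eqI)
  have c02: "fan 0 {1,2} \<in> chains G2" and c14: "fan 1 {3,4} \<in> chains G2"
    and c30: "fan 3 {0} \<in> chains G2" and c31: "fan 3 {1} \<in> chains G2"
    by (auto simp: G2_def intro: chains.base)
  have c04: "fan 0 {3,4} \<in> chains G2"
    using chains.step[OF _ c14, of "fan 0 {1,2}"] by (simp add: G2_def)
  have c10: "fan 1 {0} \<in> chains G2"
    using chains.step[OF _ c30, of "fan 1 {3,4}"] by (simp add: G2_def)
  have c00: "fan 0 {0} \<in> chains G2"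
    using chains.step[OF _ c10, of "fan 0 {1,2}"] by (simp add: G2_def)
  have c32: "fan 3 {1,2} \<in> chains G2"
    using chains.step[OF _ c02, of "fan 3 {0}"] by (simp add: G2_def)
  have c12: "fan 1 {1,2} \<in> chains G2"
    using chains.step[OF _ c32, of "fan 1 {3,4}"] by (simp add: G2_def)
  have c34: "fan 3 {3,4} \<in> chains G2"
    using chains.step[OF _ c04, of "fan 3 {0}"] by (simp add: G2_def)
  show "K2 \<subseteq> chains G2"
    unfolding K2_def using c02 c14 c30 c04 c10 c00 c32 c12 c34 by auto
  show "chains G2 \<subseteq> fans {0,1,3} {{1,2},{3,4},{0},{1}}"
    by (rule chains_fans) (auto simp: G2_def fans_def)
  show "\<forall>P\<in>K2. \<forall>Q\<in>fans {0,1,3} {{1,2},{3,4},{0},{1}}. \<not> P \<subset> Q"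
    by (simp add: K2_def fans_def psubset_eq)
  show "fans {0,1,3} {{1,2},{3,4},{0},{1}} \<subseteq> K2 \<union> {{}, fan 0 {1}, fan 1 {1}, fan 3 {1}}"
    by (auto simp: K2_def fans_def)
  show "\<forall>P\<in>{{}, fan 0 {1}, fan 1 {1}, fan 3 {1}}. \<exists>Q\<in>K2. P \<subset> Q"
    by (simp add: K2_def psubset_eq)
qed

lemma no_01_after_TS_F2: "(point 0, point 1) \<notin> pref_rel (T # S # w) 1 five_values discrete_order F2"
proof -
  let ?K = "{fan 0 {2}, fan 0 {4}, fan 0 {0}, fan 1 {1,2}, fan 1 {3,4}, fan 1 {0},
             fan 3 {1,2}, fan 3 {3,4}, fan 3 {0}}"
  have "sround K2 = ?K"
    unfolding sround_def K2_def by simp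
  moreover have "\<not> sstable K2" unfolding K2_def sstable_iff by simp
  moreover have "sstable ?K" unfolding sstable_iff by simp
  ultimately have opS_K2: "opS K2 = cleanup ?K" by (simp add: opS_one_round)
  have "(point 0, point 1) \<notin> \<Union>(apply_word w (opS K2))"
  proof (rule notin_Union_apply_word)
    show "\<Union>(opS K2) \<subseteq> \<Union>?K"
      unfolding opS_K2 by (intro Union_mono cleanup_subset)
    show "(point 0, point 1) \<notin> (\<Union>?K)\<^sup>+"
      by (rule not_reachable_if_closed[of _ "{point 0, point 2, point 4}"]) (auto simp: fan_def)
  qed
  then show ?thesis unfolding pref_rel_Cons apply_word_simps sem_F2 apply_op.simps opT_G2 .
qed

lemma opS_G2: "opS G2 = cleanup {fan 1 {4}, fan 0 {1,2}, fan 3 {0}, fan 3 {1}}"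
proof -
  have "sround G2 = {fan 1 {4}, fan 0 {1,2}, fan 3 {0}, fan 3 {1}}"
    unfolding sround_def G2_def by simp
  moreover have "\<not> sstable G2" unfolding G2_def sstable_iff by simp
  moreover have "sstable {fan 1 {4}, fan 0 {1,2}, fan 3 {0}, fan 3 {1}}"
    unfolding sstable_iff by simp
  ultimately show ?thesis by (simp add: opS_one_round)
qed

text \<open>From \<open>opS G2\<close> on, every statement is one of these fans, as they are closed under
  composition; hence a second S only removes subsumed statements.\<close>

definition C2 :: "ttuple rel set" where
  "C2 = {fan 0 {1,2}, fan 0 {4}, fan 1 {4}, fan 3 {0}, fan 3 {1,2}, fan 3 {4}, fan 3 {1}}"

lemma sstable_C2: "sstable C2"
  unfolding sstable_iff C2_def by simp

lemma chains_subset_C2: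
  assumes "G \<subseteq> insert {} C2"
  shows "chains G \<subseteq> insert {} C2"
proof (rule chains_subset_closed[OF assms])
  fix P Q assume "P \<in> G" "Q \<in> insert {} C2"
  with assms have "P \<in> insert {} C2" by blast
  with \<open>Q \<in> insert {} C2\<close> show "P O Q \<in> insert {} C2"
    unfolding C2_def by (elim insertE emptyE) simp_all
qed

lemma finite_chains_C2: "G \<subseteq> insert {} C2 \<Longrightarrow> finite (chains G)"
  by (rule finite_subset[OF chains_subset_C2]) (simp_all add: C2_def)

lemma opS_G2_subset: "opS G2 \<subseteq> insert {} C2"
  unfolding opS_G2 by (rule order_trans[OF cleanup_subset]) (simp add: C2_def)

lemma opT_opS_G2_subset: "opT (opS G2) \<subseteq> C2"
proof -
  have "fan 0 {1,2} \<in> chains (opS G2)"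
    unfolding opS_G2 cleanup_def by (auto simp: psubset_eq intro: chains.base)
  then have "{} \<notin> opT (opS G2)"
    unfolding opT_def by (rule empty_notin_cleanup) simp
  moreover have "opT (opS G2) \<subseteq> insert {} C2"
    unfolding opT_def by (rule order_trans[OF cleanup_subset chains_subset_C2[OF opS_G2_subset]])
  ultimately show ?thesis by blast
qed

lemma has_01_after_ST_F2:
  "(point 0, point 1) \<in> pref_rel [S, T] 1 five_values discrete_order F2"
  "(point 0, point 1) \<in> pref_rel [S, T, S] 1 five_values discrete_order F2"
  "(point 0, point 1) \<in> pref_rel [S, T, S, T] 1 five_values discrete_order F2"
proof -
  let ?ST = "opT (opS G2)"
  have in_S: "(point 0, point 1) \<in> \<Union>(opS G2)"
    unfolding opS_G2 by (simp add: Union_cleanup)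
  have in_ST: "(point 0, point 1) \<in> \<Union>?ST"
    using in_S by (rule subsetD[OF Union_subset_Union_opT[OF finite_chains_C2[OF opS_G2_subset]]])
  have STS: "opS ?ST = cleanup ?ST"
    by (rule opS_sstable[OF sstable_subset[OF sstable_C2 opT_opS_G2_subset]])
  have "finite ?ST"
    by (rule finite_subset[OF opT_opS_G2_subset]) (simp add: C2_def)
  with in_ST have in_STS: "(point 0, point 1) \<in> \<Union>(opS ?ST)"
    by (simp add: STS Union_cleanup)
  have "opS ?ST \<subseteq> insert {} C2"
    unfolding STS using cleanup_subset opT_opS_G2_subset by blast
  with in_STS have in_STST: "(point 0, point 1) \<in> \<Union>(opT (opS ?ST))"
    by (blast dest: finite_chains_C2 Union_subset_Union_opT)
  from in_ST in_STS in_STST show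
    "(point 0, point 1) \<in> pref_rel [S, T] 1 five_values discrete_order F2"
    "(point 0, point 1) \<in> pref_rel [S, T, S] 1 five_values discrete_order F2"
    "(point 0, point 1) \<in> pref_rel [S, T, S, T] 1 five_values discrete_order F2"
    by (simp_all only: pref_rel_def induced_def apply_word_simps apply_op.simps sem_F2)
qed

theorem mainTheorem10:
  shows "\<forall>X \<in> {[T, S], [T, S, T]}. \<forall>Y \<in> {[S, T], [S, T, S], [S, T, S, T]}.
           \<not> contained X Y \<and> \<not> contained Y X"
proof (intro ballI conjI)
  fix X Y assume X: "X \<in> {[T, S], [T, S, T]}" and Y: "Y \<in> {[S, T], [S, T, S], [S, T, S, T]}"
  from Y obtain v where "Y = S # v" by auto
  with X show "\<not> contained X Y"
    using not_contained_if_separated[OF wf_discrete_order wf_F1]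
      has_01_after_TS_F1 no_01_after_S_F1 by auto
  from X obtain w where "X = T # S # w" by auto
  with Y show "\<not> contained Y X"
    using not_contained_if_separated[OF wf_discrete_order wf_F2]
      has_01_after_ST_F2 no_01_after_TS_F2 by auto
qed

end
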